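(* Let $Q:\mathbb{D}\to[0,\infty]$ be a measurable function and let $\Phi:[0,\infty]\to[0,\infty]$ be a non-decreasing convex function. Then $$\int_0^1\frac{dr}{r\,q(r)}\ \ge\ \frac12\int_N^\infty\frac{d\tau}{\tau\,\Phi^{-1}(\tau)},$$ where $q(r)=\frac1{2\pi}\int_0^{2\pi}Q(re^{i\vartheta})\,d\vartheta$ is the average of $Q$ over the circle $|z|=r$ and $N=\int_{\mathbb{D}}\Phi(Q(z))\,dx\,dy$.
   Context: $\mathbb{D}=\{z\in\mathbb{C}:|z|<1\}$. For non-decreasing $\Phi$, $\Phi^{-1}(\tau)=\inf\{t\in[0,\infty]:\Phi(t)\ge\tau\}$, with $\inf\emptyset=\infty$. *)

theory Defs
  imports "HOL-Analysis.Analysis"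
begin

definition circ_mean :: "(complex \<Rightarrow> ennreal) \<Rightarrow> real \<Rightarrow> ennreal" where
  "circ_mean Q r = ennreal (1 / (2 * pi)) *
     (\<integral>\<^sup>+ \<theta> \<in> {0..2*pi}. Q (complex_of_real r * cis \<theta>) \<partial>lborel)"

definition gen_inv :: "(ennreal \<Rightarrow> ennreal) \<Rightarrow> ennreal \<Rightarrow> ennreal" where
  "gen_inv \<Phi> \<tau> = Inf {t. \<Phi> t \<ge> \<tau>}"

definition convex_ennreal :: "(ennreal \<Rightarrow> ennreal) \<Rightarrow> bool" where
  "convex_ennreal \<Phi> \<longleftrightarrow> (\<forall>x y. \<forall>u::real. 0 \<le> u \<and> u \<le> 1 \<longrightarrow>
      \<Phi> (ennreal u * x + ennreal (1 - u) * y) \<le> ennreal u * \<Phi> x + ennreal (1 - u) * \<Phi> y)"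

end

theory Submission
  imports Defs
begin

text \<open>
  Let q and p be the circle means of Q and of \<Phi> \<circ> Q. By the layer cake formula both sides
  are integrals over levels X of logarithmic masses: of {r \<in> (0,1) | q r < X} for dr/r on the
  left, and of {\<tau> > N | \<Phi>\<inverse> \<tau> < X} for d\<tau>/(2\<tau>) on the right; so it suffices to compare
  these masses level by level. The second set lies in (N, V] with V = sup {\<Phi> t | t < X}, so its
  mass is at most log (V/N) / 2. By Jensen's inequality, p r < V implies q r < X. Finally, in
  polar coordinates the integral of 2\<pi> r p r over (0,1) is at most N, so by Chebyshev's
  inequality p \<ge> V holds on a set of radii in (b, 1) of dr/r-mass at most N / (2\<pi> V b^2); for
  b^2 = N / (\<pi> V) this leaves {p < V} with mass at least log (1/b) - 1/2 \<ge> log (V/N) / 2.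
\<close>

section \<open>Extended non-negative reals\<close>

lemma ennreal_eq_top_if_unbounded:
  fixes x :: ennreal
  assumes "\<And>M. 0 \<le> M \<Longrightarrow> ennreal M \<le> x"
  shows "x = top"
proof (rule ccontr)
  assume "x \<noteq> top"
  then have "ennreal (enn2real x + 1) \<le> ennreal (enn2real x)"
    using assms[of "enn2real x + 1"] by (simp add: ennreal_enn2real_if)
  then show False
    by (simp add: ennreal_le_iff)
qed

lemma ennreal_less_inverse_iff: "(a :: ennreal) < inverse b \<longleftrightarrow> b < inverse a"
proof (cases a b rule: ennreal2_cases)
  case (real_real r s)
  then show ?thesis
    by (cases "r = 0"; cases "s = 0")
      (auto simp: inverse_ennreal ennreal_less_iff ennreal_inverse_positive field_simps)
qed auto

lemma ennreal_inverse_antimono: "(a :: ennreal) \<le> b \<Longrightarrow> inverse b \<le> inverse a"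
  using ennreal_less_inverse_iff[of "inverse a" b] one_divide_one_divide_ennreal[of a]
  by (simp add: divide_ennreal_def not_less[symmetric])

lemma one_divide_ennreal_mult: "0 < r \<Longrightarrow> 1 / (ennreal r * x) = ennreal (1 / r) * inverse x"
  by (simp add: divide_ennreal_def ennreal_inverse_mult' inverse_ennreal divide_inverse)

lemma mono_imp_borel_measurable:
  fixes f :: "'a::{complete_linorder, linorder_topology, second_countable_topology} \<Rightarrow>
    'b::{linorder_topology, second_countable_topology}"
  assumes "mono f"
  shows "f \<in> borel_measurable borel"
proof (rule borel_measurableI_greater)
  fix y
  define U where "U = {x. y < f x}"
  have "{Inf U<..} \<subseteq> U"
  proof
    fix x assume "x \<in> {Inf U<..}"
    then obtain u where "u \<in> U" "u < x" by (auto simp: Inf_less_iff)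
    then show "x \<in> U" using assms by (auto simp: U_def mono_def intro: less_le_trans)
  qed
  moreover have "U \<subseteq> {Inf U..}" by (auto intro: Inf_lower)
  ultimately have "U = {Inf U<..} \<union> (U \<inter> {Inf U})" by auto
  moreover have "U \<inter> {Inf U} \<in> sets borel"
    by (cases "Inf U \<in> U") auto
  ultimately have "U \<in> sets borel" by (metis borel_open open_greaterThan sets.Un)
  then show "{x \<in> space borel. y < f x} \<in> sets borel" by (simp add: U_def)
qed

section \<open>Lebesgue measure on the complex plane\<close>

lemma Complex_split_measurable[measurable]:
  "(\<lambda>(x, y). Complex x y) \<in> borel_measurable (lborel \<Otimes>\<^sub>M lborel)"
proof -
  have "(\<lambda>(x, y). Complex x y) = (\<lambda>p. complex_of_real (fst p) + \<i> * complex_of_real (snd p))"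
    by (auto simp: complex_eq_iff)
  then show ?thesis by simp
qed

lemma distr_lborel_pair_Complex:
  "distr (lborel \<Otimes>\<^sub>M lborel) borel (\<lambda>(x, y). Complex x y) = (lborel :: complex measure)"
proof (rule lborel_eqI[symmetric])
  fix l u :: complex
  assume lu: "\<And>b. b \<in> Basis \<Longrightarrow> l \<bullet> b \<le> u \<bullet> b"
  have le: "Re l \<le> Re u" "Im l \<le> Im u"
    using lu[of 1] lu[of \<i>] by (auto simp: inner_complex_def)
  have "(\<lambda>(x, y). Complex x y) -` box l u \<inter> space (lborel \<Otimes>\<^sub>M lborel) =
        {Re l<..<Re u} \<times> {Im l<..<Im u}"
    by (auto simp: box_def Basis_complex_def inner_complex_def space_pair_measure)
  then have "emeasure (distr (lborel \<Otimes>\<^sub>M lborel) borel (\<lambda>(x, y). Complex x y)) (box l u) =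
      emeasure (lborel \<Otimes>\<^sub>M lborel) ({Re l<..<Re u} \<times> {Im l<..<Im u})"
    by (subst emeasure_distr) auto
  also have "\<dots> = ennreal (Re u - Re l) * ennreal (Im u - Im l)"
    using le by (simp add: lborel.emeasure_pair_measure_Times)
  also have "\<dots> = ennreal (\<Prod>b\<in>Basis. (u - l) \<bullet> b)"
    using le by (simp add: Basis_complex_def inner_complex_def ennreal_mult')
  finally show "emeasure (distr (lborel \<Otimes>\<^sub>M lborel) borel (\<lambda>(x, y). Complex x y)) (box l u) =
      ennreal (\<Prod>b\<in>Basis. (u - l) \<bullet> b)" .
qed simp

lemma nn_integral_lborel_complex:
  assumes [measurable]: "G \<in> borel_measurable borel"
  shows "(\<integral>\<^sup>+z. G z \<partial>lborel) = (\<integral>\<^sup>+x. \<integral>\<^sup>+y. G (Complex x y) \<partial>lborel \<partial>lborel)"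
proof -
  have "(\<integral>\<^sup>+z. G z \<partial>lborel) =
      (\<integral>\<^sup>+z. G z \<partial>distr (lborel \<Otimes>\<^sub>M lborel) borel (\<lambda>(x, y). Complex x y))"
    by (simp add: distr_lborel_pair_Complex)
  also have "\<dots> = (\<integral>\<^sup>+x. \<integral>\<^sup>+y. G (Complex x y) \<partial>lborel \<partial>lborel)"
    by (subst nn_integral_distr) (auto simp: lborel.nn_integral_fst[symmetric])
  finally show ?thesis .
qed

lemma nn_integral_lborel_complex':
  assumes [measurable]: "G \<in> borel_measurable borel"
  shows "(\<integral>\<^sup>+z. G z \<partial>lborel) = (\<integral>\<^sup>+y. \<integral>\<^sup>+x. G (Complex x y) \<partial>lborel \<partial>lborel)"
  unfolding nn_integral_lborel_complex[OF assms]
  by (rule lborel_pair.Fubini'[symmetric]) simp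

definition shear_Re :: "real \<Rightarrow> complex \<Rightarrow> complex" where
  "shear_Re c z = z + of_real (c * Im z)"

definition shear_Im :: "real \<Rightarrow> complex \<Rightarrow> complex" where
  "shear_Im c z = z + \<i> * of_real (c * Re z)"

lemma nn_integral_shear_Re:
  assumes [measurable]: "G \<in> borel_measurable borel"
  shows "(\<integral>\<^sup>+z. G (shear_Re c z) \<partial>lborel) = (\<integral>\<^sup>+z. G z \<partial>lborel)"
proof -
  have shear: "Complex x y + of_real (c * y) = Complex (x + c * y) y" for x y
    by (simp add: complex_eq_iff)
  have "(\<integral>\<^sup>+z. G (shear_Re c z) \<partial>lborel) =
      (\<integral>\<^sup>+y. \<integral>\<^sup>+x. G (Complex (x + c * y) y) \<partial>lborel \<partial>lborel)"
    by (subst nn_integral_lborel_complex') (simp_all add: shear_Re_def shear del: of_real_mult)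
  also have "\<dots> = (\<integral>\<^sup>+y. \<integral>\<^sup>+x. G (Complex x y) \<partial>lborel \<partial>lborel)"
  proof (rule nn_integral_cong)
    show "(\<integral>\<^sup>+x. G (Complex (x + c * y) y) \<partial>lborel) = (\<integral>\<^sup>+x. G (Complex x y) \<partial>lborel)" for y
      using nn_integral_real_affine[of "\<lambda>x. G (Complex x y)" 1 "c * y"] by (simp add: add.commute)
  qed
  finally show ?thesis
    by (simp add: nn_integral_lborel_complex')
qed

lemma nn_integral_shear_Im:
  assumes [measurable]: "G \<in> borel_measurable borel"
  shows "(\<integral>\<^sup>+z. G (shear_Im c z) \<partial>lborel) = (\<integral>\<^sup>+z. G z \<partial>lborel)"
proof -
  have shear: "Complex x y + \<i> * of_real (c * x) = Complex x (y + c * x)" for x y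
    by (simp add: complex_eq_iff)
  have "(\<integral>\<^sup>+z. G (shear_Im c z) \<partial>lborel) =
      (\<integral>\<^sup>+x. \<integral>\<^sup>+y. G (Complex x (y + c * x)) \<partial>lborel \<partial>lborel)"
    by (subst nn_integral_lborel_complex) (simp_all add: shear_Im_def shear del: of_real_mult)
  also have "\<dots> = (\<integral>\<^sup>+x. \<integral>\<^sup>+y. G (Complex x y) \<partial>lborel \<partial>lborel)"
  proof (rule nn_integral_cong)
    show "(\<integral>\<^sup>+y. G (Complex x (y + c * x)) \<partial>lborel) = (\<integral>\<^sup>+y. G (Complex x y) \<partial>lborel)" for x
      using nn_integral_real_affine[of "\<lambda>y. G (Complex x y)" 1 "c * x"] by (simp add: add.commute)
  qed
  finally show ?thesis
    by (simp add: nn_integral_lborel_complex)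
qed

text \<open>A rotation is a product of three shears, and shears preserve Lebesgue measure by Fubini's theorem.\<close>
lemma cis_mult_eq_shears:
  assumes "cos (g/2) \<noteq> 0"
  shows "cis g * z = shear_Re (- tan (g/2)) (shear_Im (sin g) (shear_Re (- tan (g/2)) z))"
proof -
  define b where "b = g/2"
  have cb: "cos b \<noteq> 0" using assms by (simp add: b_def)
  have sg: "sin g = 2 * sin b * cos b" and cg: "cos g = 1 - 2 * (sin b)^2"
    by (simp_all add: b_def flip: sin_double cos_double_sin)
  have tb: "tan (g/2) = sin b / cos b" by (simp add: b_def tan_def)
  have cc: "cos b * (cos b * x) = (1 - sin b * sin b) * x" for x
    using sin_cos_squared_add[of b] unfolding power2_eq_square
    by (metis add_diff_cancel_left' mult.assoc)
  show ?thesis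
    using cb by (simp add: complex_eq_iff shear_Re_def shear_Im_def sg cg tb field_simps)
      (simp add: power2_eq_square algebra_simps cc)
qed

lemma nn_integral_cis_mult_cos_half_nonzero:
  assumes [measurable]: "G \<in> borel_measurable borel" and "cos (g/2) \<noteq> 0"
  shows "(\<integral>\<^sup>+z. G (cis g * z) \<partial>lborel) = (\<integral>\<^sup>+z. G z \<partial>lborel)"
proof -
  define a where "a = - tan (g/2)"
  have "(\<integral>\<^sup>+z. G (cis g * z) \<partial>lborel) =
      (\<integral>\<^sup>+z. (\<lambda>w. G (shear_Re a (shear_Im (sin g) w))) (shear_Re a z) \<partial>lborel)"
    using cis_mult_eq_shears[OF assms(2)] by (simp add: a_def)
  also have "\<dots> = (\<integral>\<^sup>+z. (\<lambda>w. G (shear_Re a w)) (shear_Im (sin g) z) \<partial>lborel)"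
    by (rule nn_integral_shear_Re) (simp add: shear_Re_def shear_Im_def)
  also have "\<dots> = (\<integral>\<^sup>+z. G (shear_Re a z) \<partial>lborel)"
    by (rule nn_integral_shear_Im) (simp add: shear_Re_def)
  also have "\<dots> = (\<integral>\<^sup>+z. G z \<partial>lborel)"
    by (rule nn_integral_shear_Re) simp
  finally show ?thesis .
qed

lemma nn_integral_uminus_lborel:
  fixes G :: "'a::euclidean_space \<Rightarrow> ennreal"
  assumes [measurable]: "G \<in> borel_measurable borel"
  shows "(\<integral>\<^sup>+z. G (- z) \<partial>lborel) = (\<integral>\<^sup>+z. G z \<partial>lborel)"
proof -
  have "(lborel :: 'a measure) = density (distr lborel borel uminus) (\<lambda>x. 1)"
    using lborel_affine[of "-1::real" "0::'a"] by simp
  then have "(\<integral>\<^sup>+z. G z \<partial>lborel) = (\<integral>\<^sup>+z. G z \<partial>density (distr lborel borel uminus) (\<lambda>x. 1))"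
    by (rule arg_cong)
  then show ?thesis
    by (simp add: nn_integral_density nn_integral_distr)
qed

lemma nn_integral_cis_mult:
  assumes [measurable]: "G \<in> borel_measurable borel"
  shows "(\<integral>\<^sup>+z. G (cis g * z) \<partial>lborel) = (\<integral>\<^sup>+z. G z \<partial>lborel)"
proof (cases "cos (g/2) = 0")
  case False
  then show ?thesis by (rule nn_integral_cis_mult_cos_half_nonzero[OF assms])
next
  case True
  \<comment> \<open>then \<open>g\<close> is an odd multiple of \<open>\<pi>\<close>: rotate by \<open>g - \<pi>\<close> and reflect\<close>
  then have "cos ((g - pi)/2) \<noteq> 0"
    using sin_cos_squared_add[of "g/2"] by (auto simp: diff_divide_distrib cos_diff)
  moreover have "cis g * z = - (cis (g - pi) * z)" for z
    by (simp add: complex_eq_iff cos_diff sin_diff)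
  ultimately have "(\<integral>\<^sup>+z. G (cis g * z) \<partial>lborel) = (\<integral>\<^sup>+z. G (- z) \<partial>lborel)"
    using nn_integral_cis_mult_cos_half_nonzero[of "\<lambda>w. G (- w)" "g - pi"] by simp
  then show ?thesis
    by (simp add: nn_integral_uminus_lborel)
qed

lemma distr_lborel_cmod:
  "distr lborel borel (cmod :: complex \<Rightarrow> real) =
    density lborel (\<lambda>\<rho>. ennreal (2 * pi * \<rho>) * indicator {0..} \<rho>)"
  (is "?D = ?R")
proof (rule measure_eqI_generator_eq[where E = "range atMost" and \<Omega> = UNIV and A = "\<lambda>i. {..real i}"])
  have "sets (borel :: real measure) = sigma_sets UNIV (range atMost)"
    by (subst borel_eq_atMost) (simp add: sets_measure_of)
  then show "sets ?D = sigma_sets UNIV (range atMost)" "sets ?R = sigma_sets UNIV (range atMost)"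
    by simp_all
  have D: "emeasure ?D {..a} = (if 0 \<le> a then ennreal (pi * a^2) else 0)" for a :: real
  proof -
    have "emeasure ?D {..a} = emeasure lborel (cball (0 :: complex) a)"
      by (subst emeasure_distr) (auto intro!: arg_cong[where f = "emeasure lborel"] simp: cball_def)
    then show ?thesis
      using emeasure_cball[of a "0 :: complex"] by (auto simp: eval_unit_ball_vol cball_empty)
  qed
  have R: "emeasure ?R {..a} = (if 0 \<le> a then ennreal (pi * a^2) else 0)" for a :: real
  proof -
    have "emeasure ?R {..a} = (\<integral>\<^sup>+x. ennreal (2 * pi * x) * indicator {0..a} x \<partial>lborel)"
      by (subst emeasure_density) (auto intro!: nn_integral_cong split: split_indicator)
    also have "\<dots> = (if 0 \<le> a then ennreal (pi * a^2) else 0)"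
    proof (cases "0 \<le> a")
      case True
      have "(\<integral>\<^sup>+x. ennreal (2 * pi * x) * indicator {0..a} x \<partial>lborel) = pi * a^2 - pi * 0^2"
        by (rule nn_integral_FTC_Icc) (auto intro!: derivative_eq_intros simp: True)
      then show ?thesis using True by simp
    qed simp
    finally show ?thesis .
  qed
  show "emeasure ?D X = emeasure ?R X" if "X \<in> range atMost" for X
    using that D R by auto
  show "emeasure ?D {..real i} \<noteq> \<infinity>" for i
    using D by simp
  show "Int_stable (range (atMost :: real \<Rightarrow> _))"
    by (auto simp: Int_stable_def)
qed (auto simp: real_arch_simple)

lemma cis_measurable[measurable]: "cis \<in> borel_measurable borel"
  by (intro borel_measurable_continuous_onI continuous_intros)

lemma circ_mean_measurable[measurable]:
  assumes [measurable]: "G \<in> borel_measurable borel"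
  shows "circ_mean G \<in> borel_measurable borel"
  unfolding circ_mean_def by measurable

lemma nn_integral_periodic_shift:
  fixes h :: "real \<Rightarrow> ennreal"
  assumes [measurable]: "h \<in> borel_measurable borel"
    and periodic: "\<And>x. h (x + 2 * pi) = h x" and b: "0 \<le> b" "b \<le> 2 * pi"
  shows "(\<integral>\<^sup>+\<theta>\<in>{0..2*pi}. h (\<theta> + b) \<partial>lborel) = (\<integral>\<^sup>+\<theta>\<in>{0..2*pi}. h \<theta> \<partial>lborel)"
proof -
  have "(\<integral>\<^sup>+\<theta>\<in>{0..2*pi}. h (\<theta> + b) \<partial>lborel) = (\<integral>\<^sup>+x\<in>{b..b+2*pi}. h x \<partial>lborel)"
    using nn_integral_real_affine[of "\<lambda>x. h x * indicator {b..b+2*pi} x" 1 b]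
    by (auto simp: add.commute intro!: nn_integral_cong split: split_indicator)
  also have "\<dots> = (\<integral>\<^sup>+x\<in>{b..2*pi}. h x \<partial>lborel) + (\<integral>\<^sup>+x\<in>{2*pi<..b+2*pi}. h x \<partial>lborel)"
    using b by (subst nn_integral_add[symmetric]) (auto intro!: nn_integral_cong split: split_indicator)
  also have "(\<integral>\<^sup>+x\<in>{2*pi<..b+2*pi}. h x \<partial>lborel) = (\<integral>\<^sup>+x\<in>{0<..b}. h x \<partial>lborel)"
    using nn_integral_real_affine[of "\<lambda>x. h x * indicator {2*pi<..b+2*pi} x" 1 "2 * pi"]
    by (auto simp: add.commute periodic intro!: nn_integral_cong split: split_indicator)
  also have "(\<integral>\<^sup>+x\<in>{b..2*pi}. h x \<partial>lborel) + (\<integral>\<^sup>+x\<in>{0<..b}. h x \<partial>lborel) =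
      (\<integral>\<^sup>+x. h x * indicator {b..2*pi} x + h x * indicator {0<..b} x \<partial>lborel)"
    by (rule nn_integral_add[symmetric]) auto
  also have "\<dots> = (\<integral>\<^sup>+x\<in>{0..2*pi}. h x \<partial>lborel)"
    using AE_lborel_singleton[of 0] AE_lborel_singleton[of b]
    by (intro nn_integral_cong_AE, eventually_elim) (use b in \<open>auto split: split_indicator\<close>)
  finally show ?thesis .
qed

lemma nn_integral_cis_mult_circle:
  assumes [measurable]: "G \<in> borel_measurable borel"
  shows "(\<integral>\<^sup>+\<theta>\<in>{0..2*pi}. G (cis \<theta> * z) \<partial>lborel) =
    (\<integral>\<^sup>+\<theta>\<in>{0..2*pi}. G (of_real (cmod z) * cis \<theta>) \<partial>lborel)"
proof -
  have polar_z: "Re z = cmod z * cos (Arg2pi z)" "Im z = cmod z * sin (Arg2pi z)"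
    by (simp_all add: cos_Arg2pi sin_Arg2pi)
  have "cis \<theta> * z = of_real (cmod z) * cis (\<theta> + Arg2pi z)" for \<theta>
    by (simp add: complex_eq_iff cos_add sin_add polar_z algebra_simps)
  moreover have "cis (x + 2 * pi) = cis x" for x
    by (simp add: complex_eq_iff)
  ultimately show ?thesis
    using nn_integral_periodic_shift[of "\<lambda>\<theta>. G (of_real (cmod z) * cis \<theta>)" "Arg2pi z"] Arg2pi[of z]
    by simp
qed

lemma nn_integral_polar:
  assumes [measurable]: "G \<in> borel_measurable borel"
  shows "(\<integral>\<^sup>+z. G z \<partial>lborel) = (\<integral>\<^sup>+\<rho>\<in>{0..}. ennreal (2 * pi * \<rho>) * circ_mean G \<rho> \<partial>lborel)"
proof -
  define A where "A \<rho> = (\<integral>\<^sup>+\<theta>\<in>{0..2*pi}. G (of_real \<rho> * cis \<theta>) \<partial>lborel)" for \<rho>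
  have [measurable]: "A \<in> borel_measurable borel"
    unfolding A_def by measurable
  have two_pi: "ennreal (2 * pi) * ennreal (1 / (2 * pi)) = 1"
    by (simp flip: ennreal_mult)
  have A_circ: "A \<rho> = ennreal (2 * pi) * circ_mean G \<rho>" for \<rho>
    by (simp add: A_def circ_mean_def mult.assoc[symmetric] two_pi)
  \<comment> \<open>average the rotation invariance over \<open>\<theta>\<close>; after Fubini the inner integral depends only on \<open>|z|\<close>\<close>
  have "ennreal (2 * pi) * (\<integral>\<^sup>+z. G z \<partial>lborel) = (\<integral>\<^sup>+\<theta>\<in>{0..2*pi}. (\<integral>\<^sup>+z. G z \<partial>lborel) \<partial>lborel)"
    by (simp add: nn_integral_cmult_indicator mult.commute)
  also have "\<dots> = (\<integral>\<^sup>+\<theta>. (\<integral>\<^sup>+z. G (cis \<theta> * z) * indicator {0..2*pi} \<theta> \<partial>lborel) \<partial>lborel)"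
    by (intro nn_integral_cong) (simp add: nn_integral_multc nn_integral_cis_mult)
  also have "\<dots> = (\<integral>\<^sup>+z. A (cmod z) \<partial>lborel)"
    by (subst lborel_pair.Fubini') (simp_all add: A_def nn_integral_cis_mult_circle)
  also have "\<dots> = (\<integral>\<^sup>+\<rho>. A \<rho> \<partial>distr lborel borel (cmod :: complex \<Rightarrow> real))"
    by (simp add: nn_integral_distr)
  also have "\<dots> = (\<integral>\<^sup>+\<rho>. ennreal (2 * pi) * (ennreal (2 * pi * \<rho>) * circ_mean G \<rho> * indicator {0..} \<rho>) \<partial>lborel)"
    by (simp add: distr_lborel_cmod nn_integral_density A_circ)
      (simp add: ac_simps)
  also have "\<dots> = ennreal (2 * pi) * (\<integral>\<^sup>+\<rho>\<in>{0..}. ennreal (2 * pi * \<rho>) * circ_mean G \<rho> \<partial>lborel)"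
    by (rule nn_integral_cmult) simp
  finally show ?thesis
    by (simp add: ennreal_mult_cancel_left)
qed

section \<open>Circle means\<close>

lemma circ_mean_const: "circ_mean (\<lambda>_. a) r = a"
proof -
  have "ennreal (1 / (2 * pi)) * ennreal (2 * pi) = 1"
    by (simp flip: ennreal_mult)
  then show ?thesis
    by (simp add: circ_mean_def nn_integral_cmult_indicator mult.left_commute)
qed

lemma circ_mean_mono:
  "(\<And>\<theta>. F (of_real r * cis \<theta>) \<le> G (of_real r * cis \<theta>)) \<Longrightarrow> circ_mean F r \<le> circ_mean G r"
  unfolding circ_mean_def by (intro mult_left_mono nn_integral_mono) (auto split: split_indicator)

lemma circ_mean_add:
  assumes [measurable]: "F \<in> borel_measurable borel" "G \<in> borel_measurable borel"
  shows "circ_mean (\<lambda>z. F z + G z) r = circ_mean F r + circ_mean G r"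
  unfolding circ_mean_def by (simp add: distrib_right nn_integral_add distrib_left)

lemma circ_mean_cmult:
  assumes [measurable]: "G \<in> borel_measurable borel"
  shows "circ_mean (\<lambda>z. c * G z) r = c * circ_mean G r"
  unfolding circ_mean_def by (simp add: nn_integral_cmult mult.assoc mult.left_commute)

section \<open>Convex functions on the extended half-line\<close>

lemma convex_ennrealD:
  "convex_ennreal \<Phi> \<Longrightarrow> 0 \<le> u \<Longrightarrow> u \<le> 1 \<Longrightarrow>
    \<Phi> (ennreal u * x + ennreal (1 - u) * y) \<le> ennreal u * \<Phi> x + ennreal (1 - u) * \<Phi> y"
  by (simp add: convex_ennreal_def)

lemma convex_ennreal_convex_on_finite_part:
  assumes "mono \<Phi>" and "convex_ennreal \<Phi>"
  shows "convex_on {x. 0 \<le> x \<and> \<Phi> (ennreal x) < top} (\<lambda>x. enn2real (\<Phi> (ennreal x)))"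
    (is "convex_on ?D ?f")
proof (rule convex_onI)
  fix u x y :: real
  assume u: "0 < u" "u < 1" and x: "x \<in> ?D" and y: "y \<in> ?D"
  have fin: "\<Phi> (ennreal x) = ennreal (?f x)" "\<Phi> (ennreal y) = ennreal (?f y)"
    using x y by (auto simp: ennreal_enn2real_if)
  have "ennreal ((1 - u) * x + u * y) = ennreal ((1 - u) * x) + ennreal (u * y)"
    using x y u by (intro ennreal_plus) auto
  also have "\<dots> = ennreal (1 - u) * ennreal x + ennreal u * ennreal y"
    using x y u by (simp add: ennreal_mult)
  finally have "\<Phi> (ennreal ((1 - u) * x + u * y)) =
      \<Phi> (ennreal (1 - u) * ennreal x + ennreal u * ennreal y)"
    by simp
  also have "\<dots> \<le> ennreal (1 - u) * \<Phi> (ennreal x) + ennreal u * \<Phi> (ennreal y)"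
    using convex_ennrealD[OF \<open>convex_ennreal \<Phi>\<close>, of "1 - u"] u by simp
  also have "\<dots> = ennreal ((1 - u) * ?f x + u * ?f y)"
    using u by (simp add: ennreal_plus ennreal_mult flip: fin)
  finally show "?f ((1 - u) *\<^sub>R x + u *\<^sub>R y) \<le> (1 - u) * ?f x + u * ?f y"
    using u by (simp add: enn2real_leI)
next
  show "convex ?D"
    unfolding is_interval_convex_1[symmetric] is_interval_1
  proof clarify
    fix a b x :: real
    assume "0 \<le> a" "a \<le> x" "x \<le> b" "\<Phi> (ennreal b) < top"
    then show "0 \<le> x \<and> \<Phi> (ennreal x) < top"
      using monoD[OF \<open>mono \<Phi>\<close>, of "ennreal x" "ennreal b"] by auto
  qed
qed

lemma convex_on_supporting_line:
  fixes f :: "real \<Rightarrow> real"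
  assumes f: "convex_on I f" and I: "u \<in> I" "w \<in> I" and t: "u < t" "t < w"
  obtains s where "(f t - f u) / (t - u) \<le> s" "\<And>z. z \<in> I \<Longrightarrow> f t + s * (z - t) \<le> f z"
proof -
  have "t \<in> I"
    using I t convex_on_imp_convex[OF f] unfolding is_interval_convex_1[symmetric] is_interval_1
    by (meson less_imp_le)
  have slopes: "(f t - f v) / (t - v) \<le> (f z - f t) / (z - t)"
    if "v \<in> I" "v < t" "z \<in> I" "t < z" for v z
    using convex_on_slope_le[OF f that(1,3) that(2,4)]
    by (metis (no_types) minus_diff_eq minus_divide_divide order_trans)
  define S where "S = {(f t - f v) / (t - v) | v. v \<in> I \<and> v < t}"
  have S: "S \<noteq> {}" "bdd_above S"
    using I t slopes by (auto simp: S_def bdd_above_def)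
  have left: "(f t - f v) / (t - v) \<le> Sup S" if "v \<in> I" "v < t" for v
    using that S by (intro cSup_upper) (auto simp: S_def)
  have right: "Sup S \<le> (f z - f t) / (z - t)" if "z \<in> I" "t < z" for z
    using that S slopes by (intro cSup_least) (auto simp: S_def)
  show ?thesis
  proof (rule that[of "Sup S"])
    show "(f t - f u) / (t - u) \<le> Sup S"
      using left I t by simp
    show "f t + Sup S * (z - t) \<le> f z" if "z \<in> I" for z
    proof (cases z t rule: linorder_cases)
      case less
      then show ?thesis using left[OF that less] by (simp add: pos_divide_le_eq algebra_simps)
    next
      case greater
      then show ?thesis using right[OF that greater] by (simp add: pos_le_divide_eq algebra_simps)
    qed simp
  qed
qed

lemma mono_above_line_ennreal:
  fixes \<Phi> :: "ennreal \<Rightarrow> ennreal"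
  assumes mono: "mono \<Phi>" and "0 \<le> s" "0 \<le> t"
    and line: "\<And>z. 0 \<le> z \<Longrightarrow> \<Phi> (ennreal t) + ennreal s * ennreal z \<le> \<Phi> (ennreal z) + ennreal s * ennreal t"
  shows "\<Phi> (ennreal t) + ennreal s * z \<le> \<Phi> z + ennreal s * ennreal t"
proof (cases z)
  case top
  have "\<Phi> top = top" if "s \<noteq> 0"
  proof (rule ennreal_eq_top_if_unbounded)
    fix M :: real assume "0 \<le> M"
    define z where "z = t + M / s + 1"
    have "0 \<le> z"
      using \<open>0 \<le> s\<close> \<open>0 \<le> M\<close> \<open>0 \<le> t\<close> by (simp add: z_def)
    have "M + s * t \<le> s * z"
      using \<open>0 \<le> s\<close> that by (simp add: z_def field_simps)
    then have "ennreal (M + s * t) \<le> ennreal (s * z)"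
      by (rule ennreal_leI)
    then have "ennreal M + ennreal s * ennreal t \<le> ennreal s * ennreal z"
      using \<open>0 \<le> s\<close> \<open>0 \<le> M\<close> \<open>0 \<le> z\<close> \<open>0 \<le> t\<close>
      by (simp add: ennreal_plus ennreal_mult del: ennreal_plus_if)
    also have "\<dots> \<le> \<Phi> (ennreal t) + ennreal s * ennreal z"
      by simp
    also have "\<dots> \<le> \<Phi> (ennreal z) + ennreal s * ennreal t"
      by (rule line[OF \<open>0 \<le> z\<close>])
    finally have "ennreal M \<le> \<Phi> (ennreal z)"
      using \<open>0 \<le> s\<close> by (simp flip: ennreal_mult')
    also have "\<dots> \<le> \<Phi> top"
      using mono by (simp add: monoD)
    finally show "ennreal M \<le> \<Phi> top" .
  qed
  then show ?thesis
    using top monoD[OF mono, of "ennreal t" top] by (cases "s = 0") auto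
qed (use line in simp)

lemma convex_ennreal_supporting_line:
  assumes mono: "mono \<Phi>" and cvx: "convex_ennreal \<Phi>"
    and t: "0 \<le> t" "t < w" and w: "\<Phi> (ennreal w) < top"
  obtains s where "0 \<le> s" "\<And>z. \<Phi> (ennreal t) + ennreal s * z \<le> \<Phi> z + ennreal s * ennreal t"
proof (cases "t = 0")
  case True
  then have "\<Phi> (ennreal t) \<le> \<Phi> z" for z
    using monoD[OF mono] by simp
  then show ?thesis
    using that[of 0] by simp
next
  case False
  define D where "D = {x. 0 \<le> x \<and> \<Phi> (ennreal x) < top}"
  define f where "f = (\<lambda>x. enn2real (\<Phi> (ennreal x)))"
  have f: "\<Phi> (ennreal x) = ennreal (f x)" if "x \<in> D" for x
    using that by (auto simp: D_def f_def ennreal_enn2real_if)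
  have f_nonneg: "0 \<le> f x" for x
    by (simp add: f_def)
  have D_below: "x \<in> D" if "0 \<le> x" "x \<le> w" for x
    using that w monoD[OF mono, of "ennreal x" "ennreal w"] by (auto simp: D_def ennreal_leI)
  have "0 \<in> D" "w \<in> D" "t \<in> D"
    using D_below t by auto
  have "convex_on D f"
    using convex_ennreal_convex_on_finite_part[OF mono cvx] by (simp add: D_def f_def)
  then obtain s where s_left: "(f t - f 0) / (t - 0) \<le> s"
    and s_line: "\<And>z. z \<in> D \<Longrightarrow> f t + s * (z - t) \<le> f z"
    by (rule convex_on_supporting_line[OF _ \<open>0 \<in> D\<close> \<open>w \<in> D\<close>]) (use t False in auto)
  have "f 0 \<le> f t"
    unfolding f_def using monoD[OF mono, of 0 "ennreal t"] \<open>t \<in> D\<close>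
    by (intro enn2real_mono) (auto simp: D_def)
  then have "0 \<le> s"
    using s_left t by (smt (verit) divide_nonneg_nonneg)
  have "\<Phi> (ennreal t) + ennreal s * ennreal z \<le> \<Phi> (ennreal z) + ennreal s * ennreal t"
    if "0 \<le> z" for z
  proof (cases "z \<in> D")
    case True
    have "f t + s * z \<le> f z + s * t"
      using s_line[OF True] by (simp add: algebra_simps)
    then have "ennreal (f t + s * z) \<le> ennreal (f z + s * t)"
      by (rule ennreal_leI)
    then show ?thesis
      using True \<open>t \<in> D\<close> \<open>0 \<le> s\<close> that t f_nonneg
      by (simp add: f ennreal_plus ennreal_mult del: ennreal_plus_if)
  next
    case False
    then show ?thesis using that by (simp add: D_def not_less top_unique)
  qed
  then show ?thesis
    using that[OF \<open>0 \<le> s\<close>] mono_above_line_ennreal[OF mono \<open>0 \<le> s\<close> t(1)] by blast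
qed

text \<open>Jensen's inequality on a circle, in a threshold form that needs no continuity of \<open>\<Phi>\<close> at the mean.\<close>
lemma convex_ennreal_circ_mean:
  assumes mono: "mono \<Phi>" and cvx: "convex_ennreal \<Phi>" and [measurable]: "G \<in> borel_measurable borel"
    and t: "0 \<le> t" "ennreal t < circ_mean G r"
  shows "\<Phi> (ennreal t) \<le> circ_mean (\<lambda>z. \<Phi> (G z)) r"
proof -
  have [measurable]: "\<Phi> \<in> borel_measurable borel"
    by (rule mono_imp_borel_measurable[OF mono])
  show ?thesis
  proof (cases "\<exists>w>t. \<Phi> (ennreal w) < top")
    case True
    then obtain w where "t < w" "\<Phi> (ennreal w) < top" by blast
    then obtain s where "0 \<le> s" and line: "\<And>z. \<Phi> (ennreal t) + ennreal s * z \<le> \<Phi> z + ennreal s * ennreal t"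
      using convex_ennreal_supporting_line[OF mono cvx t(1)] by blast
    have "\<Phi> (ennreal t) + ennreal s * ennreal t \<le> \<Phi> (ennreal t) + ennreal s * circ_mean G r"
      using t by (intro add_left_mono mult_left_mono) auto
    also have "\<dots> = circ_mean (\<lambda>z. \<Phi> (ennreal t) + ennreal s * G z) r"
      by (simp add: circ_mean_add circ_mean_cmult circ_mean_const)
    also have "\<dots> \<le> circ_mean (\<lambda>z. \<Phi> (G z) + ennreal s * ennreal t) r"
      by (rule circ_mean_mono) (rule line)
    also have "\<dots> = circ_mean (\<lambda>z. \<Phi> (G z)) r + ennreal s * ennreal t"
      by (simp add: circ_mean_add circ_mean_const)
    finally show ?thesis
      using \<open>0 \<le> s\<close> by (simp add: add.commute flip: ennreal_mult')
  next
    case False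
    then have above_t_real: "\<Phi> (ennreal w) = top" if "t < w" for w
      using that by (force simp: not_less top_unique)
    have above_t: "\<Phi> x = top" if "ennreal t < x" for x
    proof (cases x)
      case (real w)
      then show ?thesis using that t above_t_real[of w] by (simp add: ennreal_less_iff)
    next
      case top
      then show ?thesis using above_t_real[of "t + 1"] monoD[OF mono, of "ennreal (t + 1)" top]
        by (simp add: top_unique)
    qed
    \<comment> \<open>\<open>\<Phi>\<close> is infinite beyond \<open>t\<close>, so a finite mean of \<open>\<Phi> \<circ> G\<close> forces \<open>G \<le> t\<close> a.e. on the circle\<close>
    show ?thesis
    proof (rule ccontr)
      assume "\<not> ?thesis"
      then have "(\<integral>\<^sup>+\<theta>\<in>{0..2*pi}. \<Phi> (G (of_real r * cis \<theta>)) \<partial>lborel) \<noteq> top"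
        by (auto simp: circ_mean_def)
      then have "AE \<theta> in lborel. \<Phi> (G (of_real r * cis \<theta>)) * indicator {0..2*pi} \<theta> \<noteq> top"
        using nn_integral_noteq_infinite[of "\<lambda>\<theta>. \<Phi> (G (of_real r * cis \<theta>)) * indicator {0..2*pi} \<theta>"]
        by simp
      then have "AE \<theta> in lborel. G (of_real r * cis \<theta>) * indicator {0..2*pi} \<theta> \<le> ennreal t * indicator {0..2*pi} \<theta>"
        by eventually_elim (use above_t in \<open>force simp: not_le[symmetric] split: split_indicator\<close>)
      then have "circ_mean G r \<le> circ_mean (\<lambda>_. ennreal t) r"
        unfolding circ_mean_def by (intro mult_left_mono nn_integral_mono_AE) auto
      then show False
        using t by (simp add: circ_mean_const)
    qed
  qed
qed

section \<open>The layer cake formula\<close>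

lemma emeasure_lborel_atLeast: "emeasure lborel {a::real..} = top"
proof -
  have "of_nat n \<le> emeasure lborel {a::real..}" for n
    using emeasure_mono[of "{a..a + real n}" "{a..}" lborel] by (simp add: ennreal_of_nat_eq_real_of_nat)
  then show ?thesis
    by (metis SUP_least ennreal_SUP_of_nat_eq_top top_unique)
qed

lemma emeasure_lborel_below_ennreal: "emeasure lborel {y::real. 0 \<le> y \<and> ennreal y < c} = c"
proof (cases c)
  case (real r)
  then have "{y. 0 \<le> y \<and> ennreal y < c} = {0..<r}"
    by (auto simp: ennreal_less_iff)
  then show ?thesis using real by simp
next
  case top
  then show ?thesis using emeasure_lborel_atLeast[of 0] by (simp add: atLeast_def)
qed

lemma nn_integral_layer_cake:
  assumes "sigma_finite_measure M" and [measurable]: "S \<in> sets M"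
    "w \<in> borel_measurable M" "g \<in> borel_measurable M"
  shows "(\<integral>\<^sup>+x\<in>S. w x * g x \<partial>M) =
    (\<integral>\<^sup>+y\<in>{0..}. (\<integral>\<^sup>+x\<in>S \<inter> {x. ennreal y < g x}. w x \<partial>M) \<partial>lborel)"
proof -
  interpret pair_sigma_finite M lborel
    by (intro pair_sigma_finite.intro assms(1) sigma_finite_lborel)
  have "(\<integral>\<^sup>+x\<in>S. w x * g x \<partial>M) =
      (\<integral>\<^sup>+x. \<integral>\<^sup>+y. w x * indicator S x * indicator {y. 0 \<le> y \<and> ennreal y < g x} y \<partial>lborel \<partial>M)"
    by (intro nn_integral_cong)
      (simp add: nn_integral_cmult emeasure_lborel_below_ennreal mult_ac)
  also have "\<dots> = (\<integral>\<^sup>+y. \<integral>\<^sup>+x. w x * indicator S x * indicator {y. 0 \<le> y \<and> ennreal y < g x} y \<partial>M \<partial>lborel)"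
    by (rule Fubini'[symmetric]) measurable
  also have "\<dots> = (\<integral>\<^sup>+y\<in>{0..}. (\<integral>\<^sup>+x\<in>S \<inter> {x. ennreal y < g x}. w x \<partial>M) \<partial>lborel)"
    by (intro nn_integral_cong) (auto simp: nn_integral_multc[symmetric] intro!: nn_integral_cong split: split_indicator)
  finally show ?thesis .
qed

section \<open>Logarithmic masses of sublevel sets of circle means\<close>

definition radial_log_mass :: "real set \<Rightarrow> ennreal" where
  "radial_log_mass A = (\<integral>\<^sup>+r\<in>{0<..<1} \<inter> A. ennreal (1 / r) \<partial>lborel)"

definition level_log_mass :: "real \<Rightarrow> real set \<Rightarrow> ennreal" where
  "level_log_mass N A = (\<integral>\<^sup>+\<tau>\<in>{N<..} \<inter> A. ennreal (1 / (2 * \<tau>)) \<partial>lborel)"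

lemma radial_log_mass_mono: "A \<subseteq> B \<Longrightarrow> radial_log_mass A \<le> radial_log_mass B"
  unfolding radial_log_mass_def by (intro nn_integral_mono) (auto split: split_indicator)

lemma level_log_mass_mono: "A \<subseteq> B \<Longrightarrow> level_log_mass N A \<le> level_log_mass N B"
  unfolding level_log_mass_def by (intro nn_integral_mono) (auto split: split_indicator)

lemma nn_integral_inverse_Icc:
  assumes "0 < a" "a \<le> b"
  shows "(\<integral>\<^sup>+r\<in>{a..b}. ennreal (1 / r) \<partial>lborel) = ennreal (ln b - ln a)"
  by (rule nn_integral_FTC_Icc) (use assms in \<open>auto intro!: derivative_eq_intros simp: field_simps\<close>)

lemma nn_integral_circ_mean_le_ball:
  assumes [measurable]: "F \<in> borel_measurable borel"
  shows "(\<integral>\<^sup>+r\<in>{0<..<1}. ennreal (2 * pi * r) * circ_mean F r \<partial>lborel) \<le> (\<integral>\<^sup>+z\<in>ball 0 1. F z \<partial>lborel)"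
proof -
  have [measurable]: "ball (0 :: complex) 1 \<in> sets borel"
    by simp
  have "circ_mean (\<lambda>z. F z * indicator (ball 0 1) z) r = circ_mean F r" if "r \<in> {0<..<1}" for r
    using that unfolding circ_mean_def by (auto intro!: nn_integral_cong simp: norm_mult split: split_indicator)
  then have "(\<integral>\<^sup>+r\<in>{0<..<1}. ennreal (2 * pi * r) * circ_mean F r \<partial>lborel) \<le>
      (\<integral>\<^sup>+\<rho>\<in>{0..}. ennreal (2 * pi * \<rho>) * circ_mean (\<lambda>z. F z * indicator (ball 0 1) z) \<rho> \<partial>lborel)"
    by (intro nn_integral_mono) (auto split: split_indicator)
  also have "\<dots> = (\<integral>\<^sup>+z\<in>ball 0 1. F z \<partial>lborel)"
    by (rule nn_integral_polar[symmetric]) measurable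
  finally show ?thesis .
qed

lemma nn_integral_inverse_circ_mean_ge:
  assumes [measurable]: "F \<in> borel_measurable borel"
    and N: "(\<integral>\<^sup>+z\<in>ball 0 1. F z \<partial>lborel) \<le> ennreal N" "0 \<le> N" and "0 < v" "0 < b"
  shows "(\<integral>\<^sup>+r\<in>{r. b \<le> r \<and> r < 1 \<and> ennreal v \<le> circ_mean F r}. ennreal (1 / r) \<partial>lborel)
    \<le> ennreal (N / (2 * pi * v * b^2))"
proof -
  define S where "S = {r. b \<le> r \<and> r < 1 \<and> ennreal v \<le> circ_mean F r}"
  define k where "k = 2 * pi * v * b^2"
  have "k > 0"
    using \<open>0 < v\<close> \<open>0 < b\<close> by (simp add: k_def)
  have "(\<integral>\<^sup>+r\<in>S. ennreal (1 / r) \<partial>lborel) * ennreal k = (\<integral>\<^sup>+r\<in>S. ennreal (k / r) \<partial>lborel)"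
  proof (subst nn_integral_multc[symmetric])
    have "ennreal (1 / r) * indicator S r * ennreal k = ennreal (k / r) * indicator S r" for r
      using \<open>k > 0\<close> ennreal_mult''[of k "1 / r"] by (simp add: mult_ac)
    then show "(\<integral>\<^sup>+r. ennreal (1 / r) * indicator S r * ennreal k \<partial>lborel) = (\<integral>\<^sup>+r\<in>S. ennreal (k / r) \<partial>lborel)"
      by (simp only:)
  qed (simp add: S_def)
  also have "\<dots> \<le> (\<integral>\<^sup>+r\<in>{0<..<1}. ennreal (2 * pi * r) * circ_mean F r \<partial>lborel)"
  proof (intro nn_integral_mono)
    fix r
    show "ennreal (k / r) * indicator S r \<le> ennreal (2 * pi * r) * circ_mean F r * indicator {0<..<1} r"
    proof (cases "r \<in> S")
      case True
      then have r: "b \<le> r" "r < 1" "ennreal v \<le> circ_mean F r"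
        by (auto simp: S_def)
      have "b^2 \<le> r^2"
        using r \<open>0 < b\<close> by (intro power_mono) auto
      then have "k / r \<le> 2 * pi * r * v"
        using r \<open>0 < b\<close> \<open>0 < v\<close> by (simp add: k_def field_simps power2_eq_square)
      then have "ennreal (k / r) \<le> ennreal (2 * pi * r) * ennreal v"
        using r \<open>0 < b\<close> \<open>0 < v\<close> by (simp add: ennreal_mult'[symmetric] ennreal_leI)
      also have "\<dots> \<le> ennreal (2 * pi * r) * circ_mean F r"
        by (intro mult_left_mono r(3)) auto
      finally show ?thesis
        using True r \<open>0 < b\<close> by simp
    qed simp
  qed
  also have "\<dots> \<le> ennreal N"
    using nn_integral_circ_mean_le_ball[of F] N by simp
  finally have "(\<integral>\<^sup>+r\<in>S. ennreal (1 / r) \<partial>lborel) * ennreal k / ennreal k \<le> ennreal N / ennreal k"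
    by (rule divide_right_mono_ennreal)
  then have "(\<integral>\<^sup>+r\<in>S. ennreal (1 / r) \<partial>lborel) \<le> ennreal (N / k)"
    using \<open>k > 0\<close> N(2) by (simp add: ennreal_mult_divide_eq divide_ennreal)
  then show ?thesis
    by (simp add: S_def k_def)
qed

lemma radial_log_mass_circ_mean_less:
  assumes [measurable]: "F \<in> borel_measurable borel"
    and N: "(\<integral>\<^sup>+z\<in>ball 0 1. F z \<partial>lborel) \<le> ennreal N" "0 \<le> N"
    and v: "0 < v" and b: "0 < b" "b < 1"
  shows "ennreal (- ln b) \<le> radial_log_mass {r. circ_mean F r < ennreal v} + ennreal (N / (2 * pi * v * b^2))"
proof -
  define S where "S = {r. b \<le> r \<and> r < 1 \<and> ennreal v \<le> circ_mean F r}"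
  have [measurable]: "S \<in> sets borel"
    unfolding S_def by measurable
  have "ennreal (- ln b) = (\<integral>\<^sup>+r\<in>{b..1}. ennreal (1 / r) \<partial>lborel)"
    using b by (simp add: nn_integral_inverse_Icc)
  also have "\<dots> \<le> (\<integral>\<^sup>+r. ennreal (1 / r) * indicator ({0<..<1} \<inter> {r. circ_mean F r < ennreal v}) r
      + ennreal (1 / r) * indicator S r \<partial>lborel)"
    using AE_lborel_singleton[of 1]
    by (intro nn_integral_mono_AE, eventually_elim) (use b in \<open>auto simp: S_def not_less split: split_indicator\<close>)
  also have "\<dots> = radial_log_mass {r. circ_mean F r < ennreal v} + (\<integral>\<^sup>+r\<in>S. ennreal (1 / r) \<partial>lborel)"
    unfolding radial_log_mass_def by (rule nn_integral_add) measurable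
  also have "(\<integral>\<^sup>+r\<in>S. ennreal (1 / r) \<partial>lborel) \<le> ennreal (N / (2 * pi * v * b^2))"
    unfolding S_def using N v b by (intro nn_integral_inverse_circ_mean_ge) auto
  finally show ?thesis
    by (simp add: add_left_mono)
qed

lemma one_le_ln_pi: "1 \<le> ln pi"
  using e_less_272 pi_gt3 by (subst ln_ge_iff) auto

lemma radial_log_mass_circ_mean_less_log:
  assumes [measurable]: "F \<in> borel_measurable borel"
    and N: "(\<integral>\<^sup>+z\<in>ball 0 1. F z \<partial>lborel) \<le> ennreal N" "0 < N" and v: "N < v" "ennreal v \<le> V"
  shows "ennreal ((ln v - ln N) / 2) \<le> radial_log_mass {r. circ_mean F r < V}"
proof -
  \<comment> \<open>this choice makes the Chebyshev error term \<open>1/2\<close>, which \<open>ln \<pi> \<ge> 1\<close> absorbs\<close>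
  define b where "b = sqrt (N / (pi * v))"
  have "N / (pi * v) < 1"
    using N v pi_gt3 by (simp add: divide_less_eq) (smt (verit) mult_less_cancel_right2)
  then have b: "0 < b" "b < 1"
    using N v by (auto simp: b_def real_sqrt_lt_1_iff)
  have b2: "b^2 = N / (pi * v)"
    using N v by (simp add: b_def)
  have "- ln b = (ln v - ln N) / 2 + ln pi / 2"
    using N v by (simp add: b_def ln_sqrt ln_div ln_mult field_simps)
  then have "(ln v - ln N) / 2 + 1 / 2 \<le> - ln b"
    using one_le_ln_pi by linarith
  then have "ennreal ((ln v - ln N) / 2 + 1 / 2) \<le> ennreal (- ln b)"
    by (rule ennreal_leI)
  then have "ennreal ((ln v - ln N) / 2) + ennreal (1 / 2) \<le> ennreal (- ln b)"
    using N v by (subst (asm) ennreal_plus) auto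
  also have "\<dots> \<le> radial_log_mass {r. circ_mean F r < ennreal v} + ennreal (1 / 2)"
    using radial_log_mass_circ_mean_less[OF assms(1) N(1) _ _ b, of v] N v b2 by (simp add: field_simps)
  also have "\<dots> \<le> radial_log_mass {r. circ_mean F r < V} + ennreal (1 / 2)"
    using v(2) by (intro add_right_mono radial_log_mass_mono) auto
  finally show ?thesis
    by (simp add: ennreal_add_left_cancel_le add.commute[of _ "ennreal (1/2)"])
qed

lemma level_log_mass_atMost:
  assumes "0 < N" "N < v"
  shows "level_log_mass N {\<tau>. ennreal \<tau> \<le> ennreal v} = ennreal ((ln v - ln N) / 2)"
proof -
  have "level_log_mass N {\<tau>. ennreal \<tau> \<le> ennreal v} = (\<integral>\<^sup>+\<tau>\<in>{N..v}. ennreal (1 / (2 * \<tau>)) \<partial>lborel)"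
    unfolding level_log_mass_def using AE_lborel_singleton[of N]
    by (intro nn_integral_cong_AE, eventually_elim) (use assms in \<open>auto split: split_indicator\<close>)
  also have "\<dots> = ennreal (ln v / 2 - ln N / 2)"
    by (rule nn_integral_FTC_Icc) (use assms in \<open>auto intro!: derivative_eq_intros simp: field_simps\<close>)
  finally show ?thesis
    by (simp add: diff_divide_distrib)
qed

lemma radial_log_mass_circ_mean_less_eq_top:
  assumes [measurable]: "F \<in> borel_measurable borel"
    and N: "(\<integral>\<^sup>+z\<in>ball 0 1. F z \<partial>lborel) \<le> ennreal N" "0 \<le> N" "ennreal N < V"
    and degenerate: "N = 0 \<or> V = top"
  shows "radial_log_mass {r. circ_mean F r < V} = top"
proof (rule ennreal_eq_top_if_unbounded)
  fix M :: real assume "0 \<le> M"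
  have "ennreal ((2 * M + 2) / 2) \<le> radial_log_mass {r. circ_mean F r < V}"
  proof (cases "N = 0")
    case True
    obtain v where "0 < v" "ennreal v \<le> V"
    proof (cases V)
      case (real r)
      then show ?thesis
        using that[of r] \<open>ennreal N < V\<close> True by (simp add: ennreal_less_iff)
    qed (use that[of 1] in simp)
    moreover have "(\<integral>\<^sup>+z\<in>ball 0 1. F z \<partial>lborel) \<le> ennreal (v * exp (- 2 * M - 2))"
      using N(1) True by simp
    ultimately show ?thesis
      using radial_log_mass_circ_mean_less_log[OF assms(1), of "v * exp (- 2 * M - 2)" v V] \<open>0 \<le> M\<close>
      by (simp add: ln_mult mult_less_cancel_left1)
  next
    case False
    then show ?thesis
      using radial_log_mass_circ_mean_less_log[OF assms(1) N(1), of "N * exp (2 * M + 2)" V]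
        degenerate N(2) \<open>0 \<le> M\<close> by (simp add: ln_mult)
  qed
  then show "ennreal M \<le> radial_log_mass {r. circ_mean F r < V}"
    by (rule order_trans[rotated]) (simp add: ennreal_leI)
qed

lemma level_log_mass_le_radial_log_mass:
  assumes [measurable]: "F \<in> borel_measurable borel"
    and N: "(\<integral>\<^sup>+z\<in>ball 0 1. F z \<partial>lborel) \<le> ennreal N" "0 \<le> N"
  shows "level_log_mass N {\<tau>. ennreal \<tau> \<le> V} \<le> radial_log_mass {r. circ_mean F r < V}"
proof (cases "ennreal N < V")
  case False
  then have "{N<..} \<inter> {\<tau>. ennreal \<tau> \<le> V} = {}"
    using N(2) by (auto simp: not_less) (metis ennreal_le_iff not_less order_trans)
  then show ?thesis
    by (simp add: level_log_mass_def)
next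
  case True
  show ?thesis
  proof (cases "0 < N \<and> V \<noteq> top")
    case True
    then obtain v where "V = ennreal v" "N < v"
      using \<open>ennreal N < V\<close> N(2) by (cases V) (auto simp: ennreal_less_iff)
    then show ?thesis
      using radial_log_mass_circ_mean_less_log[OF assms(1) N(1), of v V] level_log_mass_atMost[of N v] True
      by simp
  next
    case False
    then show ?thesis
      using radial_log_mass_circ_mean_less_eq_top[OF assms(1) N \<open>ennreal N < V\<close>] N(2) by auto
  qed
qed

lemma gen_inv_mono: "mono (gen_inv \<Phi>)"
  unfolding gen_inv_def mono_def by (auto intro!: Inf_superset_mono)

lemma gen_inv_less_iff: "gen_inv \<Phi> \<tau> < X \<longleftrightarrow> (\<exists>t < X. \<tau> \<le> \<Phi> t)"
  unfolding gen_inv_def by (auto simp: Inf_less_iff)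

lemma level_log_mass_gen_inv_less:
  assumes mono: "mono \<Phi>" and cvx: "convex_ennreal \<Phi>" and [measurable]: "P \<in> borel_measurable borel"
    and N: "(\<integral>\<^sup>+z\<in>ball 0 1. \<Phi> (P z) \<partial>lborel) \<le> ennreal N" "0 \<le> N"
  shows "level_log_mass N {\<tau>. gen_inv \<Phi> (ennreal \<tau>) < X} \<le> radial_log_mass {r. circ_mean P r < X}"
proof -
  have [measurable]: "\<Phi> \<in> borel_measurable borel"
    by (rule mono_imp_borel_measurable[OF mono])
  define V where "V = (SUP t\<in>{t. 0 \<le> t \<and> ennreal t < X}. \<Phi> (ennreal t))"
  have "{\<tau>. gen_inv \<Phi> (ennreal \<tau>) < X} \<subseteq> {\<tau>. ennreal \<tau> \<le> V}"
  proof clarify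
    fix \<tau> assume "gen_inv \<Phi> (ennreal \<tau>) < X"
    then obtain t where t: "t < X" "ennreal \<tau> \<le> \<Phi> t"
      by (auto simp: gen_inv_less_iff)
    then obtain t' where "t = ennreal t'" "0 \<le> t'"
      by (cases t) (auto simp: top_unique dest: order.strict_trans2)
    then have "\<Phi> t \<le> V"
      using t unfolding V_def by (auto intro!: SUP_upper)
    then show "ennreal \<tau> \<le> V"
      using t by simp
  qed
  then have "level_log_mass N {\<tau>. gen_inv \<Phi> (ennreal \<tau>) < X} \<le> level_log_mass N {\<tau>. ennreal \<tau> \<le> V}"
    by (rule level_log_mass_mono)
  also have "\<dots> \<le> radial_log_mass {r. circ_mean (\<lambda>z. \<Phi> (P z)) r < V}"
    using N by (intro level_log_mass_le_radial_log_mass) measurable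
  also have "\<dots> \<le> radial_log_mass {r. circ_mean P r < X}"
  proof (intro radial_log_mass_mono subsetI, clarify, rule ccontr)
    fix r assume "circ_mean (\<lambda>z. \<Phi> (P z)) r < V" "\<not> circ_mean P r < X"
    then obtain t where "0 \<le> t" "ennreal t < X" "circ_mean (\<lambda>z. \<Phi> (P z)) r < \<Phi> (ennreal t)"
      by (auto simp: V_def less_SUP_iff)
    moreover have "\<Phi> (ennreal t) \<le> circ_mean (\<lambda>z. \<Phi> (P z)) r"
      using \<open>0 \<le> t\<close> \<open>ennreal t < X\<close> \<open>\<not> circ_mean P r < X\<close>
      by (intro convex_ennreal_circ_mean[OF mono cvx]) auto
    ultimately show False
      by simp
  qed
  finally show ?thesis .
qed

lemma lemma3p2_borel:
  assumes mono: "mono \<Phi>" and cvx: "convex_ennreal \<Phi>" and [measurable]: "P \<in> borel_measurable borel"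
    and N: "(\<integral>\<^sup>+z\<in>ball 0 1. \<Phi> (P z) \<partial>lborel) \<le> ennreal N" "0 \<le> N"
  shows "(1/2) * (\<integral>\<^sup>+\<tau>\<in>{\<tau>. ennreal N < ennreal \<tau>}. 1 / (ennreal \<tau> * gen_inv \<Phi> (ennreal \<tau>)) \<partial>lborel)
    \<le> (\<integral>\<^sup>+r\<in>{0<..<1}. 1 / (ennreal r * circ_mean P r) \<partial>lborel)"
proof -
  have [measurable]: "gen_inv \<Phi> \<in> borel_measurable borel"
    by (rule mono_imp_borel_measurable[OF gen_inv_mono])
  have half: "(1/2 :: ennreal) * ennreal (1 / \<tau>) = ennreal (1 / (2 * \<tau>))" if "0 < \<tau>" for \<tau>
    using ennreal_mult[of "1/2" "1/\<tau>"] that by (simp add: divide_ennreal_def)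
  have "(1/2) * (\<integral>\<^sup>+\<tau>\<in>{\<tau>. ennreal N < ennreal \<tau>}. 1 / (ennreal \<tau> * gen_inv \<Phi> (ennreal \<tau>)) \<partial>lborel)
      = (\<integral>\<^sup>+\<tau>\<in>{N<..}. ennreal (1 / (2 * \<tau>)) * inverse (gen_inv \<Phi> (ennreal \<tau>)) \<partial>lborel)"
    using N(2) by (subst nn_integral_cmult[symmetric])
      (auto intro!: nn_integral_cong simp: one_divide_ennreal_mult ennreal_less_iff half
        simp flip: mult.assoc split: split_indicator)
  also have "\<dots> = (\<integral>\<^sup>+y\<in>{0..}. level_log_mass N {\<tau>. gen_inv \<Phi> (ennreal \<tau>) < inverse (ennreal y)} \<partial>lborel)"
    by (subst nn_integral_layer_cake[OF sigma_finite_lborel])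
      (simp_all add: level_log_mass_def ennreal_less_inverse_iff)
  also have "\<dots> \<le> (\<integral>\<^sup>+y\<in>{0..}. radial_log_mass {r. circ_mean P r < inverse (ennreal y)} \<partial>lborel)"
    using level_log_mass_gen_inv_less[OF mono cvx _ N] by (intro nn_integral_mono) (simp add: mult_right_mono)
  also have "\<dots> = (\<integral>\<^sup>+r\<in>{0<..<1}. ennreal (1 / r) * inverse (circ_mean P r) \<partial>lborel)"
    by (subst nn_integral_layer_cake[OF sigma_finite_lborel])
      (simp_all add: radial_log_mass_def ennreal_less_inverse_iff)
  also have "\<dots> = (\<integral>\<^sup>+r\<in>{0<..<1}. 1 / (ennreal r * circ_mean P r) \<partial>lborel)"
    by (intro nn_integral_cong) (simp add: one_divide_ennreal_mult split: split_indicator)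
  finally show ?thesis .
qed

lemma borel_measurable_majorant:
  fixes Q :: "'a::euclidean_space \<Rightarrow> ennreal"
  assumes Q: "Q \<in> borel_measurable (restrict_space lebesgue S)" and [measurable]: "S \<in> sets borel"
  obtains P where "P \<in> borel_measurable borel" "\<And>z. z \<in> S \<Longrightarrow> Q z \<le> P z"
    "AE z in lebesgue. z \<in> S \<longrightarrow> P z = Q z"
proof -
  have "(\<lambda>z. Q z * indicator S z) \<in> borel_measurable lebesgue"
    using Q by (subst (asm) borel_measurable_restrict_space_iff_ennreal) auto
  then obtain g where g: "g \<in> borel_measurable lborel" and "AE z in lborel. Q z * indicator S z = g z"
    using completion_ex_borel_measurable by blast
  then obtain B where B: "B \<in> null_sets lborel" "\<And>z. z \<notin> B \<Longrightarrow> Q z * indicator S z = g z"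
    by (force elim: AE_E simp: null_sets_def)
  have [measurable]: "g \<in> borel_measurable borel" "B \<in> sets borel"
    using g B(1) by (auto simp: null_sets_def)
  define P where "P z = (if z \<in> B then top else g z)" for z
  show ?thesis
  proof (rule that[of P])
    show "P \<in> borel_measurable borel"
      unfolding P_def by measurable
    show "Q z \<le> P z" if "z \<in> S" for z
      using B(2)[of z] that by (auto simp: P_def)
    have "AE z in lebesgue. z \<notin> B"
      using AE_not_in[OF B(1)] by (rule AE_completion)
    then show "AE z in lebesgue. z \<in> S \<longrightarrow> P z = Q z"
      by eventually_elim (simp add: P_def B(2)[symmetric])
  qed
qed

lemma nn_integral_inverse_circ_mean_antimono:
  assumes "\<And>z. z \<in> ball 0 1 \<Longrightarrow> Q z \<le> P z"
  shows "(\<integral>\<^sup>+r\<in>{0<..<1}. 1 / (ennreal r * circ_mean P r) \<partial>lborel) \<le>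
    (\<integral>\<^sup>+r\<in>{0<..<1}. 1 / (ennreal r * circ_mean Q r) \<partial>lborel)"
proof -
  have "circ_mean Q r \<le> circ_mean P r" if "r \<in> {0<..<1}" for r
    using assms that by (intro circ_mean_mono) (simp add: norm_mult)
  then show ?thesis
    by (auto intro!: nn_integral_mono ennreal_inverse_antimono mult_left_mono
        simp: divide_ennreal_def split: split_indicator)
qed

theorem lemma3p2:
  fixes Q :: "complex \<Rightarrow> ennreal" and \<Phi> :: "ennreal \<Rightarrow> ennreal"
  assumes "Q \<in> borel_measurable (restrict_space lebesgue (ball 0 1))"
    and "mono \<Phi>"
    and "convex_ennreal \<Phi>"
  shows "(\<integral>\<^sup>+ r \<in> {0<..<1}. 1 / (ennreal r * circ_mean Q r) \<partial>lborel)
    \<ge> (1/2) * (\<integral>\<^sup>+ \<tau> \<in> {\<tau>::real. (\<integral>\<^sup>+ z \<in> ball 0 1. \<Phi> (Q z) \<partial>lebesgue) < ennreal \<tau>}.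
               1 / (ennreal \<tau> * gen_inv \<Phi> (ennreal \<tau>)) \<partial>lborel)"
proof -
  have [measurable]: "\<Phi> \<in> borel_measurable borel"
    by (rule mono_imp_borel_measurable[OF assms(2)])
  \<comment> \<open>a Borel majorant equal to \<open>Q\<close> a.e. leaves \<open>N\<close> unchanged and can only decrease the left-hand side\<close>
  obtain P where [measurable]: "P \<in> borel_measurable borel" and QP: "\<And>z. z \<in> ball 0 1 \<Longrightarrow> Q z \<le> P z"
    and "AE z in lebesgue. z \<in> ball 0 1 \<longrightarrow> P z = Q z"
    by (rule borel_measurable_majorant[OF assms(1)]) auto
  then have N_P: "(\<integral>\<^sup>+z\<in>ball 0 1. \<Phi> (P z) \<partial>lborel) = (\<integral>\<^sup>+z\<in>ball 0 1. \<Phi> (Q z) \<partial>lebesgue)"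
    by (subst nn_integral_completion[symmetric]) (measurable, auto intro!: nn_integral_cong_AE split: split_indicator)
  show ?thesis
  proof (cases "\<integral>\<^sup>+z\<in>ball 0 1. \<Phi> (Q z) \<partial>lebesgue")
    case (real N)
    then have "(1/2) * (\<integral>\<^sup>+\<tau>\<in>{\<tau>. ennreal N < ennreal \<tau>}. 1 / (ennreal \<tau> * gen_inv \<Phi> (ennreal \<tau>)) \<partial>lborel)
        \<le> (\<integral>\<^sup>+r\<in>{0<..<1}. 1 / (ennreal r * circ_mean P r) \<partial>lborel)"
      using lemma3p2_borel[OF assms(2,3), of P N] N_P by simp
    also have "\<dots> \<le> (\<integral>\<^sup>+r\<in>{0<..<1}. 1 / (ennreal r * circ_mean Q r) \<partial>lborel)"
      using QP by (rule nn_integral_inverse_circ_mean_antimono)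
    finally show ?thesis
      using real by simp
  qed simp
qed

end
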